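(* Let $n\ge 2$. If a nontrivial periodic braid $X\in B_n$ is given as a word of length $l$ in the generators $\sigma_1,\ldots,\sigma_{n-1}$ and their inverses, then $l\ge n-1$.
   Context: $B_n$ is Artin's braid group with generators $\sigma_1,\ldots,\sigma_{n-1}$ and relations $\sigma_i\sigma_j=\sigma_j\sigma_i$ ($|i-j|>1$), $\sigma_i\sigma_j\sigma_i=\sigma_j\sigma_i\sigma_j$ ($|i-j|=1$). $\Delta^2$, the square of $\Delta=\sigma_1(\sigma_2\sigma_1)\cdots(\sigma_{n-1}\cdots\sigma_1)$, generates the center. A braid is periodic if some nonzero power of it is a power of $\Delta^2$. *)

theory Defs
  imports Main
begin

text \<open>Braid words: a letter (i, True) stands for sigma_i, (i, False) for sigma_i inverse.\<close>

type_synonym bletter = "nat \<times> bool"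
type_synonym bword = "bletter list"

definition valid_word :: "nat \<Rightarrow> bword \<Rightarrow> bool" where
  "valid_word n w \<longleftrightarrow> (\<forall>(i, b) \<in> set w. 1 \<le> i \<and> i \<le> n - 1)"

definition inv_word :: "bword \<Rightarrow> bword" where
  "inv_word w = rev (map (\<lambda>(i, b). (i, \<not> b)) w)"

inductive braid_eq :: "nat \<Rightarrow> bword \<Rightarrow> bword \<Rightarrow> bool" for n where
  cancel: "\<lbrakk>1 \<le> i; i \<le> n - 1\<rbrakk> \<Longrightarrow> braid_eq n [(i, b), (i, \<not> b)] []"
| comm: "\<lbrakk>1 \<le> i; i \<le> n - 1; 1 \<le> j; j \<le> n - 1; i + 1 < j \<or> j + 1 < i\<rbrakk>
     \<Longrightarrow> braid_eq n [(i, True), (j, True)] [(j, True), (i, True)]"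
| braid: "\<lbrakk>1 \<le> i; i \<le> n - 1; 1 \<le> j; j \<le> n - 1; i + 1 = j \<or> j + 1 = i\<rbrakk>
     \<Longrightarrow> braid_eq n [(i, True), (j, True), (i, True)] [(j, True), (i, True), (j, True)]"
| refl: "braid_eq n w w"
| sym: "braid_eq n u v \<Longrightarrow> braid_eq n v u"
| trans: "braid_eq n u v \<Longrightarrow> braid_eq n v w \<Longrightarrow> braid_eq n u w"
| ctxt: "braid_eq n u v \<Longrightarrow> braid_eq n (x @ u @ y) (x @ v @ y)"

definition word_pow :: "bword \<Rightarrow> int \<Rightarrow> bword" where
  "word_pow w k = (if 0 \<le> k then concat (replicate (nat k) w)
                   else concat (replicate (nat (- k)) (inv_word w)))"

definition Delta_word :: "nat \<Rightarrow> bword" where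
  "Delta_word n = concat (map (\<lambda>i. map (\<lambda>j. (j, True)) (rev [1..<i+1])) [1..<n])"

definition periodic_braid :: "nat \<Rightarrow> bword \<Rightarrow> bool" where
  "periodic_braid n w \<longleftrightarrow>
     (\<exists>k::int. \<exists>m::int. k \<noteq> 0 \<and> braid_eq n (word_pow w k) (word_pow (Delta_word n) (2 * m)))"

end

theory Submission
  imports Defs
begin

text \<open>If \<open>X\<close> misses some generator \<open>\<sigma>\<^sub>g\<close>, then in \<open>X\<^sup>k\<close> no strand starting at one of the
  positions \<open>1..g\<close> crosses a strand starting after them. The signed number of such crossings is
  invariant under the braid relations, and on \<open>\<Delta>\<^sup>2\<^sup>m\<close> it is nonzero unless \<open>m = 0\<close>, because all
  crossings of \<open>\<Delta>\<^sup>\<plusminus>\<^sup>2\<^sup>m\<close> have the same sign. Hence \<open>X\<^sup>k = 1\<close>, and \<open>X = 1\<close> because \<open>B\<^sub>n\<close> is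
  torsion-free. A word of length less than \<open>n - 1\<close> misses some generator.

  Torsion-freeness follows Garside: the positive braid monoid is cancellative and has least
  common multiples; multiplying a word by a power of the central element \<open>\<Delta>\<^sup>2\<close> makes it
  positive; and in a cancellative monoid with least common multiples, commuting elements with
  equal \<open>k\<close>-th powers are equal.\<close>

section \<open>Positive braid words\<close>

definition adjacent :: "nat \<Rightarrow> nat \<Rightarrow> bool" where
  "adjacent i j \<longleftrightarrow> i + 1 = j \<or> j + 1 = i"

definition distant :: "nat \<Rightarrow> nat \<Rightarrow> bool" where
  "distant i j \<longleftrightarrow> i \<noteq> j \<and> \<not> adjacent i j"

definition braid_relator :: "nat list \<Rightarrow> nat list \<Rightarrow> bool" where
  "braid_relator a b \<longleftrightarrow>
     (\<exists>i j. distant i j \<and> a = [i, j] \<and> b = [j, i] \<or> adjacent i j \<and> a = [i, j, i] \<and> b = [j, i, j])"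

definition pos_step :: "nat list \<Rightarrow> nat list \<Rightarrow> bool" where
  "pos_step u v \<longleftrightarrow> (\<exists>x y a b. u = x @ a @ y \<and> v = x @ b @ y \<and> braid_relator a b)"

abbreviation pos_eq :: "nat list \<Rightarrow> nat list \<Rightarrow> bool" (infix \<open>\<simeq>\<close> 50) where
  "pos_eq \<equiv> pos_step\<^sup>*\<^sup>*"

lemma adjacent_sym: "adjacent i j \<Longrightarrow> adjacent j i"
  by (auto simp: adjacent_def)

lemma distant_sym: "distant i j \<Longrightarrow> distant j i"
  by (auto simp: distant_def adjacent_def)

lemma distant_if_gap: "i + 2 \<le> j \<Longrightarrow> distant i j \<and> distant j i"
  by (auto simp: distant_def adjacent_def)

lemma braid_relator_sym: "braid_relator a b \<Longrightarrow> braid_relator b a"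
  unfolding braid_relator_def using distant_sym adjacent_sym by blast

lemma pos_step_sym: "pos_step u v \<Longrightarrow> pos_step v u"
  unfolding pos_step_def using braid_relator_sym by blast

lemma pos_eq_sym: "u \<simeq> v \<Longrightarrow> v \<simeq> u"
  by (induction rule: rtranclp_induct)
    (auto intro: converse_rtranclp_into_rtranclp pos_step_sym)

lemma pos_eq_trans [trans]: "u \<simeq> v \<Longrightarrow> v \<simeq> w \<Longrightarrow> u \<simeq> w"
  by (rule rtranclp_trans)

lemma pos_step_context: "pos_step u v \<Longrightarrow> pos_step (x @ u @ y) (x @ v @ y)"
  unfolding pos_step_def by (metis append.assoc)

lemma pos_eq_context: "u \<simeq> v \<Longrightarrow> x @ u @ y \<simeq> x @ v @ y"
  by (induction rule: rtranclp_induct) (auto intro: rtranclp.rtrancl_into_rtrancl pos_step_context)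

lemma pos_eq_appendL: "u \<simeq> v \<Longrightarrow> x @ u \<simeq> x @ v"
  using pos_eq_context[of u v x "[]"] by simp

lemma pos_eq_appendR: "u \<simeq> v \<Longrightarrow> u @ y \<simeq> v @ y"
  using pos_eq_context[of u v "[]" y] by simp

lemma pos_eq_Cons: "u \<simeq> v \<Longrightarrow> a # u \<simeq> a # v"
  using pos_eq_appendL[of u v "[a]"] by simp

lemma pos_step_length: "pos_step u v \<Longrightarrow> length u = length v"
  unfolding pos_step_def braid_relator_def by auto

lemma pos_step_set: "pos_step u v \<Longrightarrow> set u = set v"
  unfolding pos_step_def braid_relator_def by auto

lemma pos_eq_length: "u \<simeq> v \<Longrightarrow> length u = length v"
  by (induction rule: rtranclp_induct) (auto dest: pos_step_length)

lemma pos_eq_set: "u \<simeq> v \<Longrightarrow> set u = set v"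
  by (induction rule: rtranclp_induct) (auto dest: pos_step_set)

lemma pos_eq_swap: "distant a b \<Longrightarrow> x @ a # b # y \<simeq> x @ b # a # y"
proof -
  assume "distant a b"
  then have "pos_step (x @ [a, b] @ y) (x @ [b, a] @ y)"
    unfolding pos_step_def braid_relator_def by blast
  then show ?thesis by simp
qed

lemma pos_eq_braid: "adjacent a b \<Longrightarrow> x @ a # b # a # y \<simeq> x @ b # a # b # y"
proof -
  assume "adjacent a b"
  then have "pos_step (x @ [a, b, a] @ y) (x @ [b, a, b] @ y)"
    unfolding pos_step_def braid_relator_def by blast
  then show ?thesis by simp
qed

lemma pos_eq_swap_head: "distant a b \<Longrightarrow> a # b # y \<simeq> b # a # y"
  using pos_eq_swap[of a b "[]"] by simp

lemma pos_eq_braid_head: "adjacent a b \<Longrightarrow> a # b # a # y \<simeq> b # a # b # y"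
  using pos_eq_braid[of a b "[]"] by simp

lemma pos_eq_commute_distant: "\<forall>x\<in>set a. distant r x \<Longrightarrow> r # a @ w \<simeq> a @ r # w"
proof (induction a)
  case Nil
  then show ?case by simp
next
  case (Cons c a)
  have "r # c # a @ w \<simeq> c # r # a @ w"
    using Cons.prems pos_eq_swap_head by simp
  also have "\<dots> \<simeq> c # a @ r # w"
    using Cons by (auto intro: pos_eq_Cons)
  finally show ?case by simp
qed

lemma pos_step_rev: "pos_step u v \<Longrightarrow> pos_step (rev u) (rev v)"
proof -
  assume "pos_step u v"
  then obtain x y a b where uv: "u = x @ a @ y" "v = x @ b @ y" and ab: "braid_relator a b"
    unfolding pos_step_def by blast
  from ab have "braid_relator (rev a) (rev b)"
    using distant_sym unfolding braid_relator_def by auto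
  then show ?thesis
    using uv unfolding pos_step_def by (metis append.assoc rev_append)
qed

lemma pos_eq_rev: "u \<simeq> v \<Longrightarrow> rev u \<simeq> rev v"
  by (induction rule: rtranclp_induct) (auto intro: rtranclp.rtrancl_into_rtrancl pos_step_rev)

section \<open>Garside's cancellation theorem\<close>

definition complement :: "nat \<Rightarrow> nat \<Rightarrow> nat list" where
  "complement i j = (if i = j then [] else if adjacent i j then [j, i] else [j])"

lemma complement_self [simp]: "complement i i = []"
  by (simp add: complement_def)

lemma complement_distant: "distant i j \<Longrightarrow> complement i j = [j]"
  by (auto simp: complement_def distant_def)

lemma complement_adjacent: "adjacent i j \<Longrightarrow> complement i j = [j, i]"
  by (auto simp: complement_def adjacent_def)

lemma complement_lcm_eq: "i # complement i j \<simeq> j # complement j i"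
proof -
  consider "i = j" | "adjacent i j" | "distant i j"
    by (auto simp: distant_def)
  then show ?thesis
  proof cases
    case 1
    then show ?thesis by simp
  next
    case 2
    then show ?thesis
      using pos_eq_braid_head[of i j "[]"] by (simp add: complement_adjacent adjacent_sym)
  next
    case 3
    then show ?thesis
      using pos_eq_swap_head[of i j "[]"] by (simp add: complement_distant distant_sym)
  qed
qed

definition complement_property_below :: "nat \<Rightarrow> bool" where
  "complement_property_below L \<longleftrightarrow> (\<forall>i j u v. length u < L \<longrightarrow> i # u \<simeq> j # v \<longrightarrow>
      (\<exists>z. u \<simeq> complement i j @ z \<and> v \<simeq> complement j i @ z))"

lemma pos_step_Cons_Cons:
  assumes "pos_step (i # u) (r # t)"
  shows "\<exists>z. u \<simeq> complement i r @ z \<and> t \<simeq> complement r i @ z"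
proof -
  obtain x y a b where split: "i # u = x @ a @ y" "r # t = x @ b @ y" and ab: "braid_relator a b"
    using assms unfolding pos_step_def by blast
  show ?thesis
  proof (cases x)
    case Nil
    from ab obtain p q where
      "distant p q \<and> a = [p, q] \<and> b = [q, p] \<or> adjacent p q \<and> a = [p, q, p] \<and> b = [q, p, q]"
      unfolding braid_relator_def by blast
    then show ?thesis
      using split Nil distant_sym adjacent_sym by (auto simp: complement_distant complement_adjacent)
  next
    case (Cons c x')
    then have "i = r" "pos_step u t"
      using split ab unfolding pos_step_def by auto
    then show ?thesis by auto
  qed
qed

lemma complement_property_belowD:
  assumes "complement_property_below L" and "a # p \<simeq> b # q" and "length p < L"
  shows "\<exists>z. p \<simeq> complement a b @ z \<and> q \<simeq> complement b a @ z"
  using assms unfolding complement_property_below_def by blast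

lemma cancel_head_below:
  assumes "complement_property_below L" and "a # p \<simeq> a # q" and "length p < L"
  shows "p \<simeq> q"
proof -
  obtain z where "p \<simeq> z" "q \<simeq> z"
    using complement_property_belowD[OF assms] by auto
  then show ?thesis using pos_eq_sym pos_eq_trans by blast
qed

lemma cancel_prefix_below:
  assumes IH: "complement_property_below L"
  shows "p @ x \<simeq> p @ y \<Longrightarrow> length (p @ x) \<le> L \<Longrightarrow> x \<simeq> y"
proof (induction p)
  case Nil
  then show ?case by simp
next
  case (Cons a p)
  then have "p @ x \<simeq> p @ y"
    using cancel_head_below[OF IH, of a "p @ x" "p @ y"] by simp
  then show ?case using Cons by simp
qed

text \<open>A rewriting step \<open>i # u \<rightarrow> r # t\<close> factors \<open>u\<close> and \<open>t\<close> through the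
  complements of \<open>i\<close> and \<open>r\<close> (\<open>h1\<close>, \<open>h2\<close>), and \<open>r # t \<simeq> j # v\<close> factors \<open>t\<close> and \<open>v\<close> through those
  of \<open>r\<close> and \<open>j\<close> (\<open>h3\<close>, \<open>h4\<close>); these combine to a factorisation of \<open>u\<close> and \<open>v\<close> through the
  complements of \<open>i\<close> and \<open>j\<close>. The cases are the adjacency patterns of \<open>i, r, j\<close>; the
  induction hypothesis is only applied to words shorter than \<open>t\<close>.\<close>

lemma cube_distant_distant:
  assumes IH: "complement_property_below L" and lt: "length t = L"
    and ir: "distant i r" and rj: "distant r j"
    and h1: "u \<simeq> r # z1" and h2: "t \<simeq> i # z1"
    and h3: "t \<simeq> j # z2" and h4: "v \<simeq> r # z2"
  shows "\<exists>z. u \<simeq> complement i j @ z \<and> v \<simeq> complement j i @ z"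
proof -
  have "i # z1 \<simeq> j # z2" using h2 h3 pos_eq_sym pos_eq_trans by blast
  moreover have "length z1 < L" using pos_eq_length[OF h2] lt by simp
  ultimately obtain w where w: "z1 \<simeq> complement i j @ w" "z2 \<simeq> complement j i @ w"
    using complement_property_belowD[OF IH] by blast
  have s1: "\<forall>x\<in>set (complement i j). distant r x"
    using ir rj distant_sym by (auto simp: complement_def)
  have s2: "\<forall>x\<in>set (complement j i). distant r x"
    using ir rj distant_sym by (auto simp: complement_def)
  have "u \<simeq> r # complement i j @ w" using h1 w(1) pos_eq_Cons pos_eq_trans by blast
  also have "\<dots> \<simeq> complement i j @ r # w" by (rule pos_eq_commute_distant[OF s1])
  finally have A: "u \<simeq> complement i j @ r # w" .
  have "v \<simeq> r # complement j i @ w" using h4 w(2) pos_eq_Cons pos_eq_trans by blast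
  also have "\<dots> \<simeq> complement j i @ r # w" by (rule pos_eq_commute_distant[OF s2])
  finally have B: "v \<simeq> complement j i @ r # w" .
  show ?thesis using A B by blast
qed

lemma cube_distant_adjacent_distant:
  assumes IH: "complement_property_below L" and lt: "length t = L"
    and ir: "distant i r" and rj: "adjacent r j" and ij: "distant i j"
    and h1: "u \<simeq> r # z1" and h2: "t \<simeq> i # z1"
    and h3: "t \<simeq> j # r # z2" and h4: "v \<simeq> r # j # z2"
  shows "\<exists>z. u \<simeq> complement i j @ z \<and> v \<simeq> complement j i @ z"
proof -
  have "i # z1 \<simeq> j # r # z2" using h2 h3 pos_eq_sym pos_eq_trans by blast
  moreover have "length z1 < L" using pos_eq_length[OF h2] lt by simp
  ultimately obtain w where w: "z1 \<simeq> complement i j @ w" "r # z2 \<simeq> complement j i @ w"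
    using complement_property_belowD[OF IH] by blast
  have len_z2: "length z2 < L" using pos_eq_length[OF h3] lt by simp
  have c_ij: "complement i j = [j]" "complement j i = [i]"
    using ij distant_sym complement_distant by auto
  obtain w' where w': "z2 \<simeq> complement r i @ w'" "w \<simeq> complement i r @ w'"
    using complement_property_belowD[OF IH, of r z2 i w] w(2) len_z2 c_ij by auto
  have c_ir: "complement r i = [i]" "complement i r = [r]"
    using ir distant_sym complement_distant by auto
  have "u \<simeq> r # z1" by (rule h1)
  also have "\<dots> \<simeq> r # j # w" using w(1) c_ij pos_eq_Cons by simp
  also have "\<dots> \<simeq> r # j # r # w'" using w'(2) c_ir pos_eq_Cons by simp
  also have "\<dots> \<simeq> j # r # j # w'" using pos_eq_braid_head[OF rj] .
  finally have A: "u \<simeq> complement i j @ r # j # w'" using c_ij by simp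
  have "v \<simeq> r # j # z2" by (rule h4)
  also have "\<dots> \<simeq> r # j # i # w'" using w'(1) c_ir pos_eq_Cons by simp
  also have "\<dots> \<simeq> r # i # j # w'" using pos_eq_swap[of j i "[r]" w'] ij distant_sym by simp
  also have "\<dots> \<simeq> i # r # j # w'" using pos_eq_swap_head[of r i] ir distant_sym by simp
  finally have B: "v \<simeq> complement j i @ r # j # w'" using c_ij by simp
  show ?thesis using A B by blast
qed

lemma cube_distant_adjacent_adjacent_factor:
  assumes IH: "complement_property_below L" and lt: "length t = L"
    and ir: "distant i r" and rj: "adjacent r j" and ij: "adjacent i j"
    and h2: "t \<simeq> i # z1" and h3: "t \<simeq> j # r # z2"
  obtains w where "z1 \<simeq> j # i # r # j # w" and "z2 \<simeq> i # j # r # w"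
proof -
  have "i # z1 \<simeq> j # r # z2" using h2 h3 pos_eq_sym pos_eq_trans by blast
  moreover have len_z1: "length z1 < L" using pos_eq_length[OF h2] lt by simp
  ultimately have "\<exists>z. z1 \<simeq> complement i j @ z \<and> r # z2 \<simeq> complement j i @ z"
    by (rule complement_property_belowD[OF IH])
  moreover have "complement i j = [j, i]" "complement j i = [i, j]"
    using ij adjacent_sym complement_adjacent by auto
  ultimately obtain w where w: "z1 \<simeq> j # i # w" "r # z2 \<simeq> i # j # w"
    by auto
  have "length z2 < L" using pos_eq_length[OF h3] lt by simp
  moreover have "complement r i = [i]" "complement i r = [r]"
    using ir distant_sym complement_distant by auto
  ultimately obtain w' where w': "z2 \<simeq> i # w'" "j # w \<simeq> r # w'"
    using complement_property_belowD[OF IH, of r z2 i "j # w"] w(2) by auto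
  have "length w < L" using pos_eq_length[OF w(1)] len_z1 by simp
  moreover have "complement j r = [r, j]" "complement r j = [j, r]"
    using rj adjacent_sym complement_adjacent by auto
  ultimately obtain w'' where w'': "w \<simeq> r # j # w''" "w' \<simeq> j # r # w''"
    using complement_property_belowD[OF IH, of j w r w'] w'(2) by auto
  have "z1 \<simeq> j # i # r # j # w''"
    using pos_eq_trans[OF w(1)] pos_eq_appendL[OF w''(1), of "[j, i]"] by simp
  moreover have "z2 \<simeq> i # j # r # w''"
    using pos_eq_trans[OF w'(1)] pos_eq_appendL[OF w''(2), of "[i]"] by simp
  ultimately show ?thesis by (rule that)
qed

lemma cube_distant_adjacent_adjacent:
  assumes IH: "complement_property_below L" and lt: "length t = L"
    and ir: "distant i r" and rj: "adjacent r j" and ij: "adjacent i j"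
    and h1: "u \<simeq> r # z1" and h2: "t \<simeq> i # z1"
    and h3: "t \<simeq> j # r # z2" and h4: "v \<simeq> r # j # z2"
  shows "\<exists>z. u \<simeq> complement i j @ z \<and> v \<simeq> complement j i @ z"
proof -
  obtain w where z1: "z1 \<simeq> j # i # r # j # w" and z2: "z2 \<simeq> i # j # r # w"
    using cube_distant_adjacent_adjacent_factor[OF IH lt ir rj ij h2 h3] .
  have ri: "distant r i" using ir distant_sym by blast
  have "u \<simeq> r # j # i # r # j # w"
    using pos_eq_trans[OF h1] pos_eq_appendL[OF z1, of "[r]"] by simp
  also have "\<dots> \<simeq> r # j # r # i # j # w" using pos_eq_swap[of i r "[r, j]"] ir by simp
  also have "\<dots> \<simeq> j # r # j # i # j # w" using pos_eq_braid_head[OF rj] .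
  also have "\<dots> \<simeq> j # r # i # j # i # w" using pos_eq_braid[of j i "[j, r]"] ij adjacent_sym
    by simp
  also have "\<dots> \<simeq> j # i # r # j # i # w" using pos_eq_swap[of r i "[j]"] ri by simp
  finally have A: "u \<simeq> complement i j @ r # j # i # w"
    using ij by (simp add: complement_adjacent)
  have "v \<simeq> r # j # i # j # r # w"
    using pos_eq_trans[OF h4] pos_eq_appendL[OF z2, of "[r, j]"] by simp
  also have "\<dots> \<simeq> r # i # j # i # r # w" using pos_eq_braid[of j i "[r]"] ij adjacent_sym by simp
  also have "\<dots> \<simeq> i # r # j # i # r # w" using pos_eq_swap_head[OF ri] .
  also have "\<dots> \<simeq> i # r # j # r # i # w" using pos_eq_swap[of i r "[i, r, j]"] ir by simp
  also have "\<dots> \<simeq> i # j # r # j # i # w" using pos_eq_braid[of r j "[i]"] rj by simp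
  finally have "v \<simeq> complement j i @ r # j # i # w"
    using ij adjacent_sym by (simp add: complement_adjacent)
  with A show ?thesis by blast
qed

lemma cube_adjacent_adjacent_factor:
  assumes IH: "complement_property_below L" and lt: "length t = L"
    and ir: "adjacent i r" and rj: "adjacent r j" and ij: "distant i j"
    and h2: "t \<simeq> i # r # z1" and h3: "t \<simeq> j # r # z2"
  obtains w where "z1 \<simeq> j # r # i # w" and "z2 \<simeq> i # r # j # w"
proof -
  have c_ij: "complement i j = [j]" "complement j i = [i]"
    using ij distant_sym complement_distant by auto
  have lens: "length (r # z1) < L" "length z1 < L" "length z2 < L"
    using pos_eq_length[OF h2] pos_eq_length[OF h3] lt by auto
  have "i # r # z1 \<simeq> j # r # z2" using h2 h3 pos_eq_sym pos_eq_trans by blast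
  then obtain w where w: "r # z1 \<simeq> j # w" "r # z2 \<simeq> i # w"
    using complement_property_belowD[OF IH, of i "r # z1" j "r # z2"] lens c_ij by auto
  have c_r: "complement r j = [j, r]" "complement j r = [r, j]"
    "complement r i = [i, r]" "complement i r = [r, i]"
    using ir rj adjacent_sym complement_adjacent by auto
  obtain w1 where w1: "z1 \<simeq> j # r # w1" "w \<simeq> r # j # w1"
    using complement_property_belowD[OF IH, of r z1 j w] w(1) lens c_r by auto
  obtain w2 where w2: "z2 \<simeq> i # r # w2" "w \<simeq> r # i # w2"
    using complement_property_belowD[OF IH, of r z2 i w] w(2) lens c_r by auto
  have "r # j # w1 \<simeq> r # i # w2" using w1(2) w2(2) pos_eq_sym pos_eq_trans by blast
  moreover have "length (j # w1) < L" using pos_eq_length[OF w1(1)] lens by simp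
  ultimately have "j # w1 \<simeq> i # w2" using cancel_head_below[OF IH] by blast
  moreover have "length w1 < L" using pos_eq_length[OF w1(1)] lens by simp
  ultimately obtain w3 where w3: "w1 \<simeq> i # w3" "w2 \<simeq> j # w3"
    using complement_property_belowD[OF IH, of j w1 i w2] c_ij by auto
  have "z1 \<simeq> j # r # i # w3"
    using pos_eq_trans[OF w1(1)] pos_eq_appendL[OF w3(1), of "[j, r]"] by simp
  moreover have "z2 \<simeq> i # r # j # w3"
    using pos_eq_trans[OF w2(1)] pos_eq_appendL[OF w3(2), of "[i, r]"] by simp
  ultimately show ?thesis by (rule that)
qed

lemma cube_adjacent_adjacent:
  assumes IH: "complement_property_below L" and lt: "length t = L"
    and ir: "adjacent i r" and rj: "adjacent r j" and "i \<noteq> j"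
    and h1: "u \<simeq> r # i # z1" and h2: "t \<simeq> i # r # z1"
    and h3: "t \<simeq> j # r # z2" and h4: "v \<simeq> r # j # z2"
  shows "\<exists>z. u \<simeq> complement i j @ z \<and> v \<simeq> complement j i @ z"
proof -
  have ij: "distant i j" and ji: "distant j i"
    using ir rj \<open>i \<noteq> j\<close> by (auto simp: distant_def adjacent_def)
  obtain w where z1: "z1 \<simeq> j # r # i # w" and z2: "z2 \<simeq> i # r # j # w"
    using cube_adjacent_adjacent_factor[OF IH lt ir rj ij h2 h3] .
  have "u \<simeq> r # i # j # r # i # w"
    using pos_eq_trans[OF h1] pos_eq_appendL[OF z1, of "[r, i]"] by simp
  also have "\<dots> \<simeq> r # j # i # r # i # w" using pos_eq_swap[of i j "[r]"] ij by simp
  also have "\<dots> \<simeq> r # j # r # i # r # w" using pos_eq_braid[of i r "[r, j]"] ir by simp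
  also have "\<dots> \<simeq> j # r # j # i # r # w" using pos_eq_braid_head[OF rj] .
  finally have A: "u \<simeq> complement i j @ r # j # i # r # w"
    using ij by (simp add: complement_distant)
  have "v \<simeq> r # j # i # r # j # w"
    using pos_eq_trans[OF h4] pos_eq_appendL[OF z2, of "[r, j]"] by simp
  also have "\<dots> \<simeq> r # i # j # r # j # w" using pos_eq_swap[of j i "[r]"] ji by simp
  also have "\<dots> \<simeq> r # i # r # j # r # w" using pos_eq_braid[of j r "[r, i]"] rj adjacent_sym
    by simp
  also have "\<dots> \<simeq> i # r # i # j # r # w" using pos_eq_braid_head[of r i] ir adjacent_sym by simp
  also have "\<dots> \<simeq> i # r # j # i # r # w" using pos_eq_swap[of i j "[i, r]"] ij by simp
  finally have "v \<simeq> complement j i @ r # j # i # r # w"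
    using ji by (simp add: complement_distant)
  with A show ?thesis by blast
qed

lemma complement_cube_distinct:
  assumes IH: "complement_property_below L" and lt: "length t = L"
    and "i \<noteq> r" "r \<noteq> j" "i \<noteq> j"
    and h1: "u \<simeq> complement i r @ z1" and h2: "t \<simeq> complement r i @ z1"
    and h3: "t \<simeq> complement r j @ z2" and h4: "v \<simeq> complement j r @ z2"
  shows "\<exists>z. u \<simeq> complement i j @ z \<and> v \<simeq> complement j i @ z"
proof -
  have cases_ij: "distant i j \<or> adjacent i j" and cases_ir: "distant i r \<or> adjacent i r"
    and cases_rj: "distant r j \<or> adjacent r j"
    using assms(3-5) by (auto simp: distant_def)
  note complements = complement_distant complement_adjacent distant_sym adjacent_sym
  show ?thesis
  proof (cases "adjacent i r")
    case False
    then have "distant i r" using cases_ir by blast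
    then show ?thesis
      using cube_distant_distant[OF IH lt, of i r j u z1 z2 v]
        cube_distant_adjacent_distant[OF IH lt, of i r j u z1 z2 v]
        cube_distant_adjacent_adjacent[OF IH lt, of i r j u z1 z2 v]
        cases_ij cases_rj h1 h2 h3 h4
      by (auto simp: complements)
  next
    case True
    with cases_rj consider "distant j r" "adjacent r i" | "adjacent i r" "adjacent r j"
      using distant_sym adjacent_sym by blast
    then show ?thesis
    proof cases
      case 1
      then show ?thesis
        using cube_distant_adjacent_distant[OF IH lt, of j r i v z2 z1 u]
          cube_distant_adjacent_adjacent[OF IH lt, of j r i v z2 z1 u]
          cases_ij h1 h2 h3 h4
        by (auto simp: complements)
    next
      case 2
      then show ?thesis
        using cube_adjacent_adjacent[OF IH lt 2 assms(5)] h1 h2 h3 h4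
        by (simp add: complements)
    qed
  qed
qed

lemma complement_cube:
  assumes IH: "complement_property_below L" and lt: "length t = L"
    and h1: "u \<simeq> complement i r @ z1" and h2: "t \<simeq> complement r i @ z1"
    and h3: "t \<simeq> complement r j @ z2" and h4: "v \<simeq> complement j r @ z2"
  shows "\<exists>z. u \<simeq> complement i j @ z \<and> v \<simeq> complement j i @ z"
proof -
  consider "i = r" | "r = j" | "i = j" "i \<noteq> r" | "i \<noteq> r" "r \<noteq> j" "i \<noteq> j"
    by blast
  then show ?thesis
  proof cases
    case 1
    with h1 h2 have "u \<simeq> z1" "t \<simeq> z1" by simp_all
    then have "u \<simeq> t"
      using pos_eq_sym pos_eq_trans by blast
    then have "u \<simeq> complement i j @ z2"
      using h3 1 pos_eq_trans by blast
    then show ?thesis using h4 1 by blast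
  next
    case 2
    with h3 h4 have "v \<simeq> z2" "t \<simeq> z2" by simp_all
    then have "v \<simeq> t"
      using pos_eq_sym pos_eq_trans by blast
    then have "v \<simeq> complement j i @ z1"
      using h2 2 pos_eq_trans by blast
    then show ?thesis using h1 2 by blast
  next
    case 3
    have "complement r i @ z1 \<simeq> complement r i @ z2"
      using h2 h3 3 pos_eq_sym pos_eq_trans by blast
    moreover have "length (complement r i @ z1) \<le> L"
      using pos_eq_length[OF h2] lt by simp
    ultimately have "z1 \<simeq> z2"
      using cancel_prefix_below[OF IH] by blast
    then have "u \<simeq> v"
      using h1 h4 3 pos_eq_appendL[of z1 z2 "complement i r"] pos_eq_sym pos_eq_trans by blast
    then show ?thesis
      using 3 by (metis append_Nil complement_self rtranclp.rtrancl_refl)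
  next
    case 4
    then show ?thesis using complement_cube_distinct[OF IH lt] h1 h2 h3 h4 by blast
  qed
qed

lemma complement_property_Suc:
  assumes IH: "complement_property_below L"
  shows "complement_property_below (Suc L)"
proof -
  have "\<exists>z. u \<simeq> complement i j @ z \<and> v \<simeq> complement j i @ z"
    if "a \<simeq> b" "a = i # u" "b = j # v" "length u = L" for a b i j u v
    using that
  proof (induction arbitrary: i u rule: converse_rtranclp_induct)
    case base
    then show ?case by auto
  next
    case (step a a')
    obtain r t where a': "a' = r # t" and lt: "length t = L"
      using pos_step_length[OF step.hyps(1)] step.prems by (cases a') auto
    obtain z1 where "u \<simeq> complement i r @ z1" "t \<simeq> complement r i @ z1"
      using pos_step_Cons_Cons step.hyps(1) step.prems a' by blast
    moreover obtain z2 where "t \<simeq> complement r j @ z2" "v \<simeq> complement j r @ z2"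
      using step.IH a' lt step.prems by blast
    ultimately show ?case by (rule complement_cube[OF IH lt])
  qed
  then show ?thesis
    using IH unfolding complement_property_below_def by (metis less_Suc_eq)
qed

lemma complement_property: "complement_property_below L"
proof (induction L)
  case 0
  then show ?case by (simp add: complement_property_below_def)
next
  case (Suc L)
  then show ?case by (rule complement_property_Suc)
qed

theorem pos_eq_Cons_ConsD:
  "i # u \<simeq> j # v \<Longrightarrow> \<exists>z. u \<simeq> complement i j @ z \<and> v \<simeq> complement j i @ z"
  using complement_property[of "Suc (length u)"] unfolding complement_property_below_def by blast

lemma pos_eq_Cons_cancel: "a # p \<simeq> a # q \<Longrightarrow> p \<simeq> q"
  using cancel_head_below[OF complement_property, of a p q "Suc (length p)"] by simp

lemma pos_eq_prefix_cancel: "p @ x \<simeq> p @ y \<Longrightarrow> x \<simeq> y"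
  by (induction p) (auto dest: pos_eq_Cons_cancel)

lemma pos_eq_suffix_cancel: "x @ p \<simeq> y @ p \<Longrightarrow> x \<simeq> y"
  using pos_eq_prefix_cancel[of "rev p" "rev x" "rev y"] pos_eq_rev by fastforce

section \<open>Left divisibility and least common multiples\<close>

definition pos_dvd :: "nat list \<Rightarrow> nat list \<Rightarrow> bool" (infix \<open>\<preceq>\<close> 50) where
  "a \<preceq> c \<longleftrightarrow> (\<exists>x. a @ x \<simeq> c)"

lemma pos_dvd_refl: "a \<preceq> a"
  unfolding pos_dvd_def by (rule exI[of _ "[]"]) simp

lemma pos_dvd_Nil: "[] \<preceq> c"
  unfolding pos_dvd_def by auto

lemma pos_dvd_trans [trans]: "a \<preceq> b \<Longrightarrow> b \<preceq> c \<Longrightarrow> a \<preceq> c"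
proof -
  assume "a \<preceq> b" "b \<preceq> c"
  then obtain x y where "a @ x \<simeq> b" "b @ y \<simeq> c"
    unfolding pos_dvd_def by blast
  then have "a @ x @ y \<simeq> c"
    using pos_eq_appendR[of "a @ x" b y] pos_eq_trans by auto
  then show ?thesis unfolding pos_dvd_def by blast
qed

lemma pos_dvd_pos_eq_trans [trans]: "a \<preceq> b \<Longrightarrow> b \<simeq> c \<Longrightarrow> a \<preceq> c"
  unfolding pos_dvd_def using pos_eq_trans by blast

lemma pos_eq_pos_dvd_trans [trans]: "a \<simeq> b \<Longrightarrow> b \<preceq> c \<Longrightarrow> a \<preceq> c"
  unfolding pos_dvd_def using pos_eq_appendR pos_eq_trans by blast

lemma pos_dvd_prepend: "a \<preceq> b \<Longrightarrow> p @ a \<preceq> p @ b"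
  unfolding pos_dvd_def using pos_eq_appendL by fastforce

lemma pos_dvd_prepend_cancel: "p @ a \<preceq> p @ b \<Longrightarrow> a \<preceq> b"
  unfolding pos_dvd_def using pos_eq_prefix_cancel by fastforce

lemma pos_dvd_appendE:
  assumes "p @ a \<preceq> d"
  obtains d' where "d \<simeq> p @ d'" and "a \<preceq> d'"
proof -
  from assms obtain x where "p @ a @ x \<simeq> d"
    unfolding pos_dvd_def by auto
  with that show ?thesis
    using pos_eq_sym pos_dvd_refl[of a] unfolding pos_dvd_def by blast
qed

lemma pos_dvd_appendD: "p @ a \<preceq> d \<Longrightarrow> p \<preceq> d"
  unfolding pos_dvd_def by (metis append.assoc)

lemma pos_dvd_antisym: "a \<preceq> b \<Longrightarrow> b \<preceq> a \<Longrightarrow> a \<simeq> b"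
proof -
  assume "a \<preceq> b" "b \<preceq> a"
  then obtain x y where xy: "a @ x \<simeq> b" "b @ y \<simeq> a"
    unfolding pos_dvd_def by blast
  then have "length a + length x = length b" "length b + length y = length a"
    using pos_eq_length[OF xy(1)] pos_eq_length[OF xy(2)] by simp_all
  then have "length x = 0" by linarith
  then show ?thesis using xy by simp
qed

lemma pos_dvd_complement: "[i] \<preceq> c \<Longrightarrow> [j] \<preceq> c \<Longrightarrow> i # complement i j \<preceq> c"
proof -
  assume "[i] \<preceq> c" "[j] \<preceq> c"
  then obtain x y where x: "i # x \<simeq> c" and "j # y \<simeq> c"
    unfolding pos_dvd_def by auto
  then have "i # x \<simeq> j # y"
    using pos_eq_sym pos_eq_trans by blast
  then obtain z where "x \<simeq> complement i j @ z"
    using pos_eq_Cons_ConsD by blast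
  then have "i # complement i j @ z \<simeq> c"
    using x pos_eq_Cons pos_eq_sym pos_eq_trans by blast
  then show ?thesis unfolding pos_dvd_def by (metis append_Cons)
qed

definition is_lcm :: "nat list set \<Rightarrow> nat list \<Rightarrow> bool" where
  "is_lcm S m \<longleftrightarrow> (\<forall>s\<in>S. s \<preceq> m) \<and> (\<forall>d. (\<forall>s\<in>S. s \<preceq> d) \<longrightarrow> m \<preceq> d)"

lemma is_lcm_pos_eq: "is_lcm S m \<Longrightarrow> m \<simeq> m' \<Longrightarrow> is_lcm S m'"
  unfolding is_lcm_def using pos_dvd_pos_eq_trans pos_eq_pos_dvd_trans pos_eq_sym by blast

lemma is_lcm_insert_pos_eq: "is_lcm (insert a S) m \<Longrightarrow> a \<simeq> a' \<Longrightarrow> is_lcm (insert a' S) m"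
  unfolding is_lcm_def using pos_eq_pos_dvd_trans pos_eq_sym by blast

lemma is_lcm_prepend:
  assumes "S \<noteq> {}" and lcm: "is_lcm S m"
  shows "is_lcm ((@) p ` S) (p @ m)"
  unfolding is_lcm_def
proof (intro conjI allI impI)
  show "\<forall>s\<in>(@) p ` S. s \<preceq> p @ m"
    using lcm pos_dvd_prepend unfolding is_lcm_def by blast
next
  fix d
  assume d: "\<forall>s\<in>(@) p ` S. s \<preceq> d"
  obtain s0 where "s0 \<in> S" using assms(1) by blast
  with d obtain d' where d': "d \<simeq> p @ d'"
    by (meson image_eqI pos_dvd_appendE)
  have "\<forall>s\<in>S. s \<preceq> d'"
    using d d' pos_dvd_pos_eq_trans pos_dvd_prepend_cancel by blast
  then have "p @ m \<preceq> p @ d'"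
    using lcm pos_dvd_prepend unfolding is_lcm_def by blast
  then show "p @ m \<preceq> d"
    using d' pos_dvd_pos_eq_trans pos_eq_sym by blast
qed

lemma is_lcm_via_prefix:
  assumes a: "is_lcm {a, l} (l @ x)" and b: "is_lcm {b, l} (l @ y)" and xy: "is_lcm {x, y} m"
    and l: "\<And>d. a \<preceq> d \<Longrightarrow> b \<preceq> d \<Longrightarrow> l \<preceq> d"
  shows "is_lcm {a, b} (l @ m)"
  unfolding is_lcm_def
proof (intro conjI allI impI)
  have "l @ x \<preceq> l @ m" "l @ y \<preceq> l @ m"
    using xy pos_dvd_prepend unfolding is_lcm_def by auto
  then show "\<forall>s\<in>{a, b}. s \<preceq> l @ m"
    using a b pos_dvd_trans unfolding is_lcm_def by blast
next
  fix d
  assume "\<forall>s\<in>{a, b}. s \<preceq> d"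
  then have "a \<preceq> d" "b \<preceq> d" by simp_all
  moreover have "l \<preceq> d" using l calculation .
  ultimately have "l @ x \<preceq> d" "l @ y \<preceq> d"
    using a b unfolding is_lcm_def by simp_all
  moreover obtain d' where d': "d \<simeq> l @ d'"
    using \<open>l \<preceq> d\<close> pos_dvd_appendE[of l "[]"] by auto
  ultimately have "l @ x \<preceq> l @ d'" "l @ y \<preceq> l @ d'"
    using pos_dvd_pos_eq_trans by blast+
  then have "x \<preceq> d'" "y \<preceq> d'"
    using pos_dvd_prepend_cancel by blast+
  then have "l @ m \<preceq> l @ d'"
    using xy pos_dvd_prepend unfolding is_lcm_def by blast
  then show "l @ m \<preceq> d"
    using d' pos_dvd_pos_eq_trans pos_eq_sym by blast
qed

lemma is_lcm_Cons_exists: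
  assumes IH: "\<forall>c'. length c' < length c \<longrightarrow> (\<forall>a b. a \<preceq> c' \<longrightarrow> b \<preceq> c' \<longrightarrow> (\<exists>m. is_lcm {a, b} m))"
    and a: "i # a \<preceq> c" and w: "i # w \<preceq> c"
  shows "\<exists>x. is_lcm {i # a, i # w} (i # w @ x) \<and> i # w @ x \<preceq> c"
proof -
  obtain c' where c': "c \<simeq> i # c'" and "a \<preceq> c'"
    using a pos_dvd_appendE[of "[i]" a c] by auto
  moreover have "[i] @ w \<preceq> [i] @ c'"
    using w c' by (simp add: pos_dvd_pos_eq_trans)
  then have "w \<preceq> c'"
    by (rule pos_dvd_prepend_cancel)
  moreover have "length c' < length c"
    using pos_eq_length[OF c'] by simp
  ultimately obtain m where "is_lcm {a, w} m"
    using IH by blast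
  then have lcm: "is_lcm {i # a, i # w} (i # m)"
    using is_lcm_prepend[of "{a, w}" m "[i]"] by simp
  then have "i # w \<preceq> i # m"
    unfolding is_lcm_def by simp
  then obtain x where x: "i # w @ x \<simeq> i # m"
    unfolding pos_dvd_def by auto
  have "i # m \<preceq> c"
    using lcm a w unfolding is_lcm_def by simp
  with x have "i # w @ x \<preceq> c"
    by (rule pos_eq_pos_dvd_trans)
  moreover have "is_lcm {i # a, i # w} (i # w @ x)"
    using lcm pos_eq_sym[OF x] by (rule is_lcm_pos_eq)
  ultimately show ?thesis by blast
qed

lemma is_lcm_Cons_Cons_distinct:
  assumes IH: "\<forall>c'. length c' < length c \<longrightarrow> (\<forall>a b. a \<preceq> c' \<longrightarrow> b \<preceq> c' \<longrightarrow> (\<exists>m. is_lcm {a, b} m))"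
    and a: "i # a \<preceq> c" and b: "j # b \<preceq> c"
  shows "\<exists>m. is_lcm {i # a, j # b} m"
proof -
  define l where "l = i # complement i j"
  have l_least: "l \<preceq> d" if "i # a \<preceq> d" "j # b \<preceq> d" for d
    using that pos_dvd_appendD[of "[i]"] pos_dvd_appendD[of "[j]"] pos_dvd_complement
    unfolding l_def by simp
  have l_eq: "j # complement j i \<simeq> l"
    unfolding l_def using complement_lcm_eq pos_eq_sym by blast
  have "l \<preceq> c" using l_least a b .
  obtain x where x: "is_lcm {i # a, l} (l @ x)" "l @ x \<preceq> c"
    using is_lcm_Cons_exists[of c i a "complement i j", OF IH a] \<open>l \<preceq> c\<close>
    unfolding l_def by auto
  obtain y' where y': "is_lcm {j # b, j # complement j i} (j # complement j i @ y')"
    "j # complement j i @ y' \<preceq> c"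
    using is_lcm_Cons_exists[of c j b "complement j i", OF IH b]
      pos_eq_pos_dvd_trans[OF l_eq \<open>l \<preceq> c\<close>]
    by blast
  have y'_eq: "j # complement j i @ y' \<simeq> l @ y'"
    using pos_eq_appendR[OF l_eq] by simp
  have "is_lcm {l, j # b} (l @ y')"
    using is_lcm_pos_eq[OF is_lcm_insert_pos_eq[OF _ l_eq] y'_eq] y'(1)
    by (simp add: insert_commute)
  then have y: "is_lcm {j # b, l} (l @ y')"
    by (simp add: insert_commute)
  obtain c' where c': "c \<simeq> l @ c'"
    using \<open>l \<preceq> c\<close> pos_dvd_appendE[of l "[]"] by auto
  have "l @ x \<preceq> l @ c'"
    using x(2) c' by (rule pos_dvd_pos_eq_trans)
  moreover have "l @ y' \<preceq> l @ c'"
    using pos_eq_pos_dvd_trans[OF pos_eq_sym[OF y'_eq] y'(2)] c' by (rule pos_dvd_pos_eq_trans)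
  ultimately have "x \<preceq> c'" "y' \<preceq> c'"
    by (simp_all add: pos_dvd_prepend_cancel)
  moreover have "length c' < length c"
    using pos_eq_length[OF c'] unfolding l_def by simp
  ultimately obtain m where "is_lcm {x, y'} m"
    using IH by blast
  then show ?thesis
    using is_lcm_via_prefix[OF x(1) y] l_least by blast
qed

lemma is_lcm2_exists: "a \<preceq> c \<Longrightarrow> b \<preceq> c \<Longrightarrow> \<exists>m. is_lcm {a, b} m"
proof (induction "length c" arbitrary: a b c rule: less_induct)
  case less
  have IH: "\<forall>c'. length c' < length c \<longrightarrow> (\<forall>a b. a \<preceq> c' \<longrightarrow> b \<preceq> c' \<longrightarrow> (\<exists>m. is_lcm {a, b} m))"
    using less.hyps by blast
  show ?case
  proof (cases a)
    case Nil
    then have "is_lcm {a, b} b"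
      unfolding is_lcm_def using pos_dvd_Nil pos_dvd_refl by blast
    then show ?thesis by blast
  next
    case (Cons i a')
    show ?thesis
    proof (cases b)
      case Nil
      then have "is_lcm {a, b} a"
        unfolding is_lcm_def using pos_dvd_Nil pos_dvd_refl by blast
      then show ?thesis by blast
    next
      case (Cons j b')
      show ?thesis
      proof (cases "i = j")
        case True
        have "i # a' \<preceq> c" "i # b' \<preceq> c"
          using less.prems \<open>a = i # a'\<close> Cons True by simp_all
        then obtain x where "is_lcm {i # a', i # b'} (i # b' @ x)"
          using is_lcm_Cons_exists[OF IH] by blast
        then show ?thesis
          using \<open>a = i # a'\<close> Cons True by blast
      next
        case False
        have "i # a' \<preceq> c" "j # b' \<preceq> c"
          using less.prems \<open>a = i # a'\<close> Cons by simp_all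
        then show ?thesis
          using is_lcm_Cons_Cons_distinct[OF IH] \<open>a = i # a'\<close> Cons by blast
      qed
    qed
  qed
qed

lemma is_lcm_exists:
  assumes "finite S" shows "\<forall>s\<in>S. s \<preceq> c \<Longrightarrow> \<exists>m. is_lcm S m"
  using assms
proof (induction rule: finite_induct)
  case empty
  then show ?case
    unfolding is_lcm_def using pos_dvd_Nil by blast
next
  case (insert a S)
  then obtain m0 where m0: "is_lcm S m0" by blast
  moreover have "m0 \<preceq> c" "a \<preceq> c"
    using m0 insert.prems unfolding is_lcm_def by auto
  ultimately obtain m where m: "is_lcm {a, m0} m"
    using is_lcm2_exists by blast
  have "is_lcm (insert a S) m"
    unfolding is_lcm_def
  proof (intro conjI allI impI)
    show "\<forall>s\<in>insert a S. s \<preceq> m"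
      using m m0 pos_dvd_trans unfolding is_lcm_def by blast
  next
    fix d
    assume "\<forall>s\<in>insert a S. s \<preceq> d"
    then have "a \<preceq> d" "m0 \<preceq> d"
      using m0 unfolding is_lcm_def by simp_all
    then show "m \<preceq> d"
      using m unfolding is_lcm_def by simp
  qed
  then show ?case by blast
qed

section \<open>Uniqueness of roots of commuting positive braids\<close>

abbreviation list_pow :: "'a list \<Rightarrow> nat \<Rightarrow> 'a list" where
  "list_pow x k \<equiv> concat (replicate k x)"

lemma list_pow_add: "list_pow x (a + b) = list_pow x a @ list_pow x b"
  by (simp add: replicate_add)

lemma list_pow_mult: "list_pow x (k * m) = list_pow (list_pow x m) k"
  by (induction k) (simp_all add: list_pow_add)

lemma list_pow_commute: "list_pow x a @ list_pow x b = list_pow x b @ list_pow x a"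
  by (metis list_pow_add add.commute)

lemma set_list_pow: "set (list_pow x k) \<subseteq> set x"
  by (induction k) auto

lemma pos_eq_commute_list_pow: "x @ p \<simeq> p @ x \<Longrightarrow> x @ list_pow p j \<simeq> list_pow p j @ x"
proof (induction j)
  case 0
  then show ?case by simp
next
  case (Suc j)
  have "x @ p @ list_pow p j \<simeq> p @ x @ list_pow p j"
    using pos_eq_appendR[OF Suc.prems, of "list_pow p j"] by simp
  also have "\<dots> \<simeq> p @ list_pow p j @ x"
    using pos_eq_appendL[OF Suc.IH[OF Suc.prems], of p] by simp
  finally show ?case by simp
qed

lemma pos_eq_commute_list_pows:
  assumes "d @ p \<simeq> p @ d"
  shows "list_pow p a @ list_pow d b \<simeq> list_pow d b @ list_pow p a"
proof -
  have "list_pow p a @ d \<simeq> d @ list_pow p a"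
    using pos_eq_sym[OF pos_eq_commute_list_pow[OF assms]] .
  then show ?thesis
    by (rule pos_eq_commute_list_pow)
qed

lemma pos_eq_shift_list_pows:
  assumes "d @ p \<simeq> p @ d"
  shows "p @ list_pow d (Suc i) @ list_pow p j \<simeq> d @ list_pow d i @ list_pow p (Suc j)"
  using pos_eq_appendR[OF pos_eq_commute_list_pows[OF assms, of 1 "Suc i"], of "list_pow p j"]
  by simp

lemma is_lcm_shift:
  assumes "S \<noteq> {}" and lcm: "is_lcm S m" and shift: "\<forall>s\<in>S. \<exists>s'\<in>S. d @ s \<simeq> p @ s'"
  shows "d @ m \<preceq> p @ m"
proof -
  have "d @ s \<preceq> p @ m" if "s \<in> S" for s
  proof -
    obtain s' where "s' \<in> S" "d @ s \<simeq> p @ s'"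
      using shift \<open>s \<in> S\<close> by blast
    moreover have "p @ s' \<preceq> p @ m"
      using \<open>s' \<in> S\<close> lcm pos_dvd_prepend unfolding is_lcm_def by blast
    ultimately show ?thesis by (blast intro: pos_eq_pos_dvd_trans)
  qed
  then show ?thesis
    using is_lcm_prepend[OF assms(1) lcm, of d] unfolding is_lcm_def by blast
qed

theorem pos_eq_root_unique:
  assumes "0 < k" and pow: "list_pow p k \<simeq> list_pow d k" and comm: "d @ p \<simeq> p @ d"
  shows "p \<simeq> d"
proof -
  obtain n where k: "k = Suc n"
    using \<open>0 < k\<close> gr0_implies_Suc by blast
  define S where "S = {list_pow d i @ list_pow p j | i j. i + j = n}"
  have "S \<subseteq> (\<lambda>(i, j). list_pow d i @ list_pow p j) ` ({..n} \<times> {..n})"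
    unfolding S_def by force
  then have "finite S"
    by (rule finite_subset) simp
  have S_ends: "list_pow d n \<in> S" "list_pow p n \<in> S"
    unfolding S_def by force+
  then have "S \<noteq> {}" by blast
  have "\<forall>s\<in>S. s \<preceq> list_pow d n @ list_pow p n"
  proof
    fix s
    assume "s \<in> S"
    then obtain i j where s: "s = list_pow d i @ list_pow p j" and ij: "i + j = n"
      unfolding S_def by blast
    have "s @ list_pow p i @ list_pow d j = list_pow d i @ list_pow p n @ list_pow d j"
      using s ij list_pow_add[where x=p and a=j and b=i] by (simp add: add.commute)
    also have "\<dots> \<simeq> list_pow d i @ list_pow d j @ list_pow p n"
      using pos_eq_appendL[OF pos_eq_commute_list_pows[OF comm]] .
    also have "\<dots> = list_pow d n @ list_pow p n"
      using ij list_pow_add[where x=d and a=i and b=j] by simp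
    finally show "s \<preceq> list_pow d n @ list_pow p n"
      unfolding pos_dvd_def by (metis append.assoc)
  qed
  with \<open>finite S\<close> obtain m where m: "is_lcm S m"
    using is_lcm_exists by blast
  have "\<exists>s'\<in>S. d @ s \<simeq> p @ s'" if "s \<in> S" for s
  proof -
    obtain i j where s: "s = list_pow d i @ list_pow p j" and ij: "i + j = n"
      using \<open>s \<in> S\<close> unfolding S_def by blast
    show ?thesis
    proof (cases j)
      case 0
      then have "d @ s \<simeq> p @ list_pow p n"
        using s ij k pow pos_eq_sym by simp
      then show ?thesis using S_ends by blast
    next
      case (Suc j')
      then have "Suc i + j' = n" using ij by simp
      then have "list_pow d (Suc i) @ list_pow p j' \<in> S"
        unfolding S_def by blast
      moreover have "d @ s \<simeq> p @ list_pow d (Suc i) @ list_pow p j'"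
        using pos_eq_sym[OF pos_eq_shift_list_pows[OF comm]] s Suc by simp
      ultimately show ?thesis by blast
    qed
  qed
  then have "d @ m \<preceq> p @ m"
    using is_lcm_shift[OF \<open>S \<noteq> {}\<close> m] by blast
  have "\<exists>s'\<in>S. p @ s \<simeq> d @ s'" if "s \<in> S" for s
  proof -
    obtain i j where s: "s = list_pow d i @ list_pow p j" and ij: "i + j = n"
      using \<open>s \<in> S\<close> unfolding S_def by blast
    show ?thesis
    proof (cases i)
      case 0
      then have "p @ s \<simeq> d @ list_pow d n"
        using s ij k pow by simp
      then show ?thesis using S_ends by blast
    next
      case (Suc i')
      then have "i' + Suc j = n" using ij by simp
      then have "list_pow d i' @ list_pow p (Suc j) \<in> S"
        unfolding S_def by blast
      moreover have "p @ s \<simeq> d @ list_pow d i' @ list_pow p (Suc j)"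
        using pos_eq_shift_list_pows[OF comm] s Suc by simp
      ultimately show ?thesis by blast
    qed
  qed
  then have "p @ m \<preceq> d @ m"
    using is_lcm_shift[OF \<open>S \<noteq> {}\<close> m] by blast
  with \<open>d @ m \<preceq> p @ m\<close> have "p @ m \<simeq> d @ m"
    by (rule pos_dvd_antisym[rotated])
  then show ?thesis
    by (rule pos_eq_suffix_cancel)
qed

section \<open>The full twist\<close>

definition cycle_word :: "nat \<Rightarrow> nat list" where
  "cycle_word n = [1..<n]"

text \<open>Garside's element \<open>\<Delta>\<^sup>2 = (\<sigma>\<^sub>1 \<cdots> \<sigma>\<^sub>n\<^sub>-\<^sub>1)\<^sup>n\<close>; its cofactor at \<open>i\<close> omits the leading
  letter \<open>1\<close> of the \<open>i\<close>-th factor, which becomes \<open>i\<close> when moved to the front.\<close>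

definition full_twist :: "nat \<Rightarrow> nat list" where
  "full_twist n = list_pow (cycle_word n) n"

definition full_twist_cofactor :: "nat \<Rightarrow> nat \<Rightarrow> nat list" where
  "full_twist_cofactor n i =
     list_pow (cycle_word n) (i - 1) @ [2..<n] @ list_pow (cycle_word n) (n - i)"

lemma set_cycle_word: "set (cycle_word n) \<subseteq> {1..n - 1}"
  unfolding cycle_word_def by auto

lemma set_full_twist: "set (full_twist n) \<subseteq> {1..n - 1}"
  unfolding full_twist_def using subset_trans[OF set_list_pow set_cycle_word] .

lemma set_full_twist_cofactor: "set (full_twist_cofactor n i) \<subseteq> {1..n - 1}"
  unfolding full_twist_cofactor_def using subset_trans[OF set_list_pow set_cycle_word] by auto

lemma cycle_word_conj:
  assumes "1 \<le> j" "j + 2 \<le> n"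
  shows "cycle_word n @ [j] \<simeq> Suc j # cycle_word n"
proof -
  define T where "T = [Suc (Suc j)..<n]"
  have cycle: "cycle_word n = [1..<j] @ j # Suc j # T"
  proof -
    have "[1..<n] = [1..<j] @ [j..<n]"
      using assms upt_add_eq_append[of 1 j "n - j"] by simp
    also have "[j..<n] = j # Suc j # T"
      unfolding T_def using assms by (simp add: upt_conv_Cons)
    finally show ?thesis unfolding cycle_word_def by simp
  qed
  have distant_T: "\<forall>x\<in>set T. distant j x"
    unfolding T_def using distant_if_gap by auto
  have distant_init: "\<forall>x\<in>set [1..<j]. distant (Suc j) x"
    using distant_if_gap by auto
  have "cycle_word n @ [j] = ([1..<j] @ [j, Suc j]) @ T @ [j]"
    using cycle by simp
  also have "\<dots> \<simeq> ([1..<j] @ [j, Suc j]) @ j # T"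
    using pos_eq_appendL[OF pos_eq_sym[OF pos_eq_commute_distant[OF distant_T, of "[]"]],
        of "[1..<j] @ [j, Suc j]"] by simp
  also have "\<dots> = [1..<j] @ j # Suc j # j # T"
    by simp
  also have "\<dots> \<simeq> [1..<j] @ Suc j # j # Suc j # T"
    using pos_eq_braid[of j "Suc j" "[1..<j]" T] by (simp add: adjacent_def)
  also have "\<dots> \<simeq> Suc j # [1..<j] @ j # Suc j # T"
    using pos_eq_sym[OF pos_eq_commute_distant[OF distant_init]] .
  finally show ?thesis using cycle by simp
qed

lemma cycle_word_pow_conj:
  assumes "1 \<le> j" "j + l + 1 \<le> n"
  shows "list_pow (cycle_word n) l @ [j] \<simeq> (j + l) # list_pow (cycle_word n) l"
  using assms(2)
proof (induction l)
  case 0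
  then show ?case by simp
next
  case (Suc l)
  have "cycle_word n @ list_pow (cycle_word n) l @ [j]
      \<simeq> cycle_word n @ (j + l) # list_pow (cycle_word n) l"
    using pos_eq_appendL[OF Suc.IH] Suc.prems by simp
  also have "\<dots> \<simeq> Suc (j + l) # cycle_word n @ list_pow (cycle_word n) l"
    using pos_eq_appendR[OF cycle_word_conj[of "j + l" n]] assms(1) Suc.prems by simp
  finally show ?case by simp
qed

lemma cycle_word_sq_last:
  "2 \<le> n \<Longrightarrow> list_pow (cycle_word n) 2 @ [n - 1] \<simeq> 1 # list_pow (cycle_word n) 2"
proof (induction n rule: nat_induct_at_least)
  case base
  then show ?case by (simp add: cycle_word_def numeral_2_eq_2)
next
  case (Suc n)
  define g where "g = [1..<n - 1]"
  have cycle: "cycle_word n = g @ [n - 1]"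
  proof -
    have "[1..<n] = [1..<Suc (n - 1)]"
      using Suc.hyps by simp
    also have "\<dots> = [1..<n - 1] @ [n - 1]"
      using Suc.hyps by (intro upt_Suc_append) simp
    finally show ?thesis unfolding g_def cycle_word_def .
  qed
  have cycle_Suc: "cycle_word (Suc n) = cycle_word n @ [n]"
    unfolding cycle_word_def using Suc.hyps by simp
  have distant_g: "\<forall>x\<in>set g. distant n x"
    unfolding g_def using distant_if_gap by auto
  have adj: "adjacent n (n - 1)"
    using Suc.hyps by (auto simp: adjacent_def)
  have sq: "list_pow (cycle_word (Suc n)) 2 \<simeq> list_pow (cycle_word n) 2 @ [n, n - 1]"
  proof -
    have "list_pow (cycle_word (Suc n)) 2 = cycle_word n @ n # g @ [n - 1, n]"
      using cycle_Suc cycle by (simp add: numeral_2_eq_2)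
    also have "\<dots> \<simeq> cycle_word n @ g @ [n, n - 1, n]"
      using pos_eq_appendL[OF pos_eq_commute_distant[OF distant_g]] by simp
    also have "\<dots> \<simeq> cycle_word n @ g @ [n - 1, n, n - 1]"
      using pos_eq_braid[of n "n - 1" "cycle_word n @ g" "[]"] adj by simp
    also have "\<dots> = list_pow (cycle_word n) 2 @ [n, n - 1]"
      using cycle by (simp add: numeral_2_eq_2)
    finally show ?thesis .
  qed
  have "list_pow (cycle_word (Suc n)) 2 @ [n] \<simeq> list_pow (cycle_word n) 2 @ [n, n - 1, n]"
    using pos_eq_appendR[OF sq, of "[n]"] by simp
  also have "\<dots> \<simeq> list_pow (cycle_word n) 2 @ [n - 1, n, n - 1]"
    using pos_eq_braid[of n "n - 1" "list_pow (cycle_word n) 2" "[]"] adj by simp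
  also have "\<dots> \<simeq> 1 # list_pow (cycle_word n) 2 @ [n, n - 1]"
    using pos_eq_appendR[OF Suc.IH, of "[n, n - 1]"] by simp
  also have "\<dots> \<simeq> 1 # list_pow (cycle_word (Suc n)) 2"
    using pos_eq_Cons[OF pos_eq_sym[OF sq]] by simp
  finally show ?case by simp
qed

lemma full_twist_letter_commute:
  assumes "1 \<le> i" "i \<le> n - 1"
  shows "full_twist n @ [i] \<simeq> i # full_twist n"
proof -
  let ?A = "list_pow (cycle_word n) (i - 1)" and ?B = "list_pow (cycle_word n) 2"
    and ?C = "list_pow (cycle_word n) (n - 1 - i)"
  have "2 \<le> n"
    using assms by simp
  have n: "(i - 1) + (2 + (n - 1 - i)) = n"
    using assms by simp
  have "full_twist n = list_pow (cycle_word n) ((i - 1) + (2 + (n - 1 - i)))"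
    unfolding full_twist_def by (simp only: n)
  then have twist: "full_twist n = ?A @ ?B @ ?C"
    by (simp only: list_pow_add)
  have "?A @ ?B @ ?C @ [i] \<simeq> ?A @ ?B @ (n - 1) # ?C"
    using pos_eq_appendL[OF cycle_word_pow_conj[of i "n - 1 - i" n], of "?A @ ?B"] assms by simp
  also have "\<dots> \<simeq> ?A @ 1 # ?B @ ?C"
    using pos_eq_appendL[OF pos_eq_appendR[OF cycle_word_sq_last[OF \<open>2 \<le> n\<close>], of ?C], of ?A]
    by simp
  also have "\<dots> \<simeq> i # ?A @ ?B @ ?C"
    using pos_eq_appendR[OF cycle_word_pow_conj[of 1 "i - 1" n], of "?B @ ?C"] assms by simp
  finally show ?thesis using twist by simp
qed

lemma full_twist_Cons_cofactor:
  assumes "1 \<le> i" "i \<le> n - 1"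
  shows "full_twist n \<simeq> i # full_twist_cofactor n i"
proof -
  let ?A = "list_pow (cycle_word n) (i - 1)" and ?C = "[2..<n] @ list_pow (cycle_word n) (n - i)"
  have cycle: "cycle_word n = 1 # [2..<n]"
    unfolding cycle_word_def using assms by (simp add: upt_conv_Cons numeral_2_eq_2)
  have n: "(i - 1) + (1 + (n - i)) = n"
    using assms by simp
  have "full_twist n = list_pow (cycle_word n) ((i - 1) + (1 + (n - i)))"
    unfolding full_twist_def by (simp only: n)
  then have "full_twist n = ?A @ [1] @ ?C"
    using cycle by (simp only: list_pow_add) simp
  also have "\<dots> \<simeq> (1 + (i - 1)) # ?A @ ?C"
    using pos_eq_appendR[OF cycle_word_pow_conj[of 1 "i - 1" n], of ?C] assms by simp
  finally show ?thesis
    unfolding full_twist_cofactor_def using assms by simp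
qed

lemma full_twist_cofactor_snoc:
  assumes "1 \<le> i" "i \<le> n - 1"
  shows "full_twist_cofactor n i @ [i] \<simeq> full_twist n"
proof -
  have "i # full_twist_cofactor n i @ [i] \<simeq> full_twist n @ [i]"
    using pos_eq_appendR[OF pos_eq_sym[OF full_twist_Cons_cofactor[OF assms]]] by simp
  also have "\<dots> \<simeq> i # full_twist n"
    by (rule full_twist_letter_commute[OF assms])
  finally show ?thesis
    by (rule pos_eq_Cons_cancel)
qed

lemma full_twist_central: "set w \<subseteq> {1..n - 1} \<Longrightarrow> full_twist n @ w \<simeq> w @ full_twist n"
proof (induction w)
  case Nil
  then show ?case by simp
next
  case (Cons a w)
  have "full_twist n @ [a] @ w \<simeq> a # full_twist n @ w"
    using pos_eq_appendR[OF full_twist_letter_commute[of a n]] Cons.prems by simp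
  also have "\<dots> \<simeq> a # w @ full_twist n"
    using Cons by (auto intro: pos_eq_Cons)
  finally show ?case by simp
qed

lemma full_twist_pow_central:
  "set w \<subseteq> {1..n - 1} \<Longrightarrow> list_pow (full_twist n) l @ w \<simeq> w @ list_pow (full_twist n) l"
  using pos_eq_sym[OF pos_eq_commute_list_pow[OF pos_eq_sym[OF full_twist_central]]] by blast

section \<open>Torsion-freeness of the braid group\<close>

declare braid_eq.trans [trans]

lemma braid_eq_appendL: "braid_eq n u v \<Longrightarrow> braid_eq n (x @ u) (x @ v)"
  using braid_eq.ctxt[of n u v x "[]"] by simp

lemma braid_eq_appendR: "braid_eq n u v \<Longrightarrow> braid_eq n (u @ y) (v @ y)"
  using braid_eq.ctxt[of n u v "[]" y] by simp

lemma braid_eq_append: "braid_eq n a b \<Longrightarrow> braid_eq n c d \<Longrightarrow> braid_eq n (a @ c) (b @ d)"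
  using braid_eq_appendL braid_eq_appendR braid_eq.trans by blast

lemma inv_word_Nil [simp]: "inv_word [] = []"
  by (simp add: inv_word_def)

lemma inv_word_Cons [simp]: "inv_word ((i, b) # w) = inv_word w @ [(i, \<not> b)]"
  by (simp add: inv_word_def)

lemma set_inv_word: "set (inv_word w) = (\<lambda>(i, b). (i, \<not> b)) ` set w"
  unfolding inv_word_def by auto

lemma valid_word_Cons [simp]: "valid_word n ((i, b) # w) \<longleftrightarrow> 1 \<le> i \<and> i \<le> n - 1 \<and> valid_word n w"
  unfolding valid_word_def by auto

lemma valid_inv_word: "valid_word n w \<Longrightarrow> valid_word n (inv_word w)"
  unfolding valid_word_def set_inv_word by auto

lemma braid_eq_cancel_letter:
  assumes "1 \<le> i" "i \<le> n - 1"
  shows "braid_eq n (x @ (i, b) # (i, \<not> b) # y) (x @ y)"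
  using braid_eq.ctxt[OF braid_eq.cancel[OF assms, of b], of x y] by simp

lemma braid_eq_inv_word_right: "valid_word n w \<Longrightarrow> braid_eq n (w @ inv_word w) []"
proof (induction w)
  case Nil
  then show ?case by (simp add: braid_eq.refl)
next
  case (Cons a w)
  obtain i b where a: "a = (i, b)" by fastforce
  with Cons.prems have "1 \<le> i" "i \<le> n - 1" "valid_word n w" by simp_all
  then have "braid_eq n ([a] @ (w @ inv_word w) @ [(i, \<not> b)]) ([a] @ [] @ [(i, \<not> b)])"
    using braid_eq_appendL[OF braid_eq_appendR[OF Cons.IH]] by blast
  also have "braid_eq n ([a] @ [] @ [(i, \<not> b)]) []"
    using braid_eq_cancel_letter[of i n "[]" b "[]"] a \<open>1 \<le> i\<close> \<open>i \<le> n - 1\<close> by simp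
  finally show ?case using a by simp
qed

lemma braid_eq_inv_word_left: "valid_word n w \<Longrightarrow> braid_eq n (inv_word w @ w) []"
proof (induction w)
  case Nil
  then show ?case by (simp add: braid_eq.refl)
next
  case (Cons a w)
  obtain i b where a: "a = (i, b)" by fastforce
  with Cons.prems have "1 \<le> i" "i \<le> n - 1" "valid_word n w" by simp_all
  have "braid_eq n (inv_word w @ (i, \<not> b) # (i, \<not> \<not> b) # w) (inv_word w @ w)"
    using \<open>1 \<le> i\<close> \<open>i \<le> n - 1\<close> by (rule braid_eq_cancel_letter)
  also have "braid_eq n (inv_word w @ w) []"
    using Cons.IH \<open>valid_word n w\<close> .
  finally show ?case using a by simp
qed

lemma braid_eq_prefix_cancel:
  assumes "valid_word n p" and "braid_eq n (p @ u) (p @ v)"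
  shows "braid_eq n u v"
proof -
  have "braid_eq n u ((inv_word p @ p) @ u)"
    using braid_eq.sym[OF braid_eq_appendR[OF braid_eq_inv_word_left[OF assms(1)]]] by simp
  also have "braid_eq n \<dots> ((inv_word p @ p) @ v)"
    using braid_eq_appendL[OF assms(2), of "inv_word p"] by simp
  also have "braid_eq n \<dots> v"
    using braid_eq_appendR[OF braid_eq_inv_word_left[OF assms(1)]] by simp
  finally show ?thesis .
qed

lemma braid_eq_commute_inverse_letter:
  assumes "1 \<le> i" "i \<le> n - 1" and comm: "braid_eq n ((i, True) # w) (w @ [(i, True)])"
  shows "braid_eq n ((i, False) # w) (w @ [(i, False)])"
proof -
  have "braid_eq n ((i, False) # w) ([(i, False)] @ w @ (i, True) # (i, False) # [])"
    using braid_eq.sym[OF braid_eq_cancel_letter[OF assms(1,2), of "(i, False) # w" True "[]"]]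
    by simp
  also have "braid_eq n \<dots> ([(i, False)] @ ((i, True) # w) @ [(i, False)])"
    using braid_eq_appendL[OF braid_eq_appendR[OF braid_eq.sym[OF comm], of "[(i, False)]"],
        of "[(i, False)]"] by simp
  also have "braid_eq n \<dots> (w @ [(i, False)])"
    using braid_eq_cancel_letter[OF assms(1,2), of "[]" False "w @ [(i, False)]"] by simp
  finally show ?thesis .
qed

definition positive_word :: "nat list \<Rightarrow> bword" where
  "positive_word w = map (\<lambda>i. (i, True)) w"

lemma positive_word_append [simp]: "positive_word (u @ v) = positive_word u @ positive_word v"
  unfolding positive_word_def by simp

lemma positive_word_Cons [simp]: "positive_word (a # v) = (a, True) # positive_word v"
  unfolding positive_word_def by simp

lemma positive_word_Nil [simp]: "positive_word [] = []"
  unfolding positive_word_def by simp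

lemma length_positive_word [simp]: "length (positive_word w) = length w"
  unfolding positive_word_def by simp

lemma valid_positive_word: "set w \<subseteq> {1..n - 1} \<Longrightarrow> valid_word n (positive_word w)"
  unfolding positive_word_def valid_word_def by auto

lemma pos_step_imp_braid_eq:
  assumes "pos_step u v" "set u \<subseteq> {1..n - 1}"
  shows "braid_eq n (positive_word u) (positive_word v)"
proof -
  obtain x y a b where uv: "u = x @ a @ y" "v = x @ b @ y" and ab: "braid_relator a b"
    using assms(1) unfolding pos_step_def by blast
  have valid: "set a \<subseteq> {1..n - 1}"
    using assms(2) uv(1) by auto
  from ab obtain i j where
    "distant i j \<and> a = [i, j] \<and> b = [j, i] \<or> adjacent i j \<and> a = [i, j, i] \<and> b = [j, i, j]"
    unfolding braid_relator_def by blast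
  then have "braid_eq n (positive_word a) (positive_word b)"
  proof (elim disjE conjE)
    assume "distant i j" "a = [i, j]" "b = [j, i]"
    then show ?thesis
      using valid by (auto simp: distant_def adjacent_def intro: braid_eq.comm)
  next
    assume "adjacent i j" "a = [i, j, i]" "b = [j, i, j]"
    then show ?thesis
      using valid by (auto simp: adjacent_def intro: braid_eq.braid)
  qed
  then show ?thesis
    using uv braid_eq.ctxt by simp
qed

lemma pos_eq_imp_braid_eq:
  "u \<simeq> v \<Longrightarrow> set u \<subseteq> {1..n - 1} \<Longrightarrow> braid_eq n (positive_word u) (positive_word v)"
proof (induction rule: rtranclp_induct)
  case base
  show ?case by (rule braid_eq.refl)
next
  case (step v w)
  then have "braid_eq n (positive_word v) (positive_word w)"
    using pos_step_imp_braid_eq pos_eq_set by metis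
  then show ?case
    using step braid_eq.trans by blast
qed

text \<open>The numerator of a word \<open>w\<close> is a positive word equal to \<open>\<Delta>\<^sup>2\<^sup>|\<^sup>w\<^sup>| w\<close> in \<open>B\<^sub>n\<close>.
  Letters outside \<open>1..n-1\<close> are sent to \<open>\<Delta>\<^sup>2\<close>, so that all numerators commute with \<open>\<Delta>\<^sup>2\<close>.\<close>

definition numerator_letter :: "nat \<Rightarrow> bletter \<Rightarrow> nat list" where
  "numerator_letter n a =
     (if 1 \<le> fst a \<and> fst a \<le> n - 1
      then (if snd a then full_twist n @ [fst a] else full_twist_cofactor n (fst a))
      else full_twist n)"

definition numerator :: "nat \<Rightarrow> bword \<Rightarrow> nat list" where
  "numerator n w = concat (map (numerator_letter n) w)"

lemma numerator_Nil [simp]: "numerator n [] = []"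
  by (simp add: numerator_def)

lemma numerator_Cons [simp]: "numerator n (a # w) = numerator_letter n a @ numerator n w"
  by (simp add: numerator_def)

lemma numerator_append [simp]: "numerator n (u @ v) = numerator n u @ numerator n v"
  by (simp add: numerator_def)

lemma numerator_list_pow: "numerator n (list_pow w k) = list_pow (numerator n w) k"
  by (induction k) simp_all

lemma set_numerator_letter: "set (numerator_letter n a) \<subseteq> {1..n - 1}"
  using set_full_twist[of n] set_full_twist_cofactor[of n "fst a"]
  unfolding numerator_letter_def by auto

lemma set_numerator: "set (numerator n w) \<subseteq> {1..n - 1}"
  using set_numerator_letter unfolding numerator_def by fastforce

lemma numerator_positive_word:
  "set w \<subseteq> {1..n - 1} \<Longrightarrow> numerator n (positive_word w) \<simeq> list_pow (full_twist n) (length w) @ w"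
proof (induction w)
  case Nil
  then show ?case by simp
next
  case (Cons a w)
  let ?W = "list_pow (full_twist n) (length w)"
  have a: "1 \<le> a" "a \<le> n - 1"
    using Cons.prems by auto
  then have "numerator n (positive_word (a # w))
      = full_twist n @ [a] @ numerator n (positive_word w)"
    by (simp add: numerator_letter_def)
  also have "\<dots> \<simeq> full_twist n @ [a] @ ?W @ w"
    using pos_eq_appendL[OF Cons.IH, of "full_twist n @ [a]"] Cons.prems by simp
  also have "\<dots> \<simeq> full_twist n @ ?W @ [a] @ w"
    using pos_eq_appendL[OF pos_eq_appendR[OF pos_eq_sym[OF full_twist_pow_central[where w="[a]"]],
        where y=w], where x="full_twist n"] a
    by simp
  finally show ?case by simp
qed

text \<open>\<open>u\<close> and \<open>v\<close> have the same value \<open>\<Delta>\<^sup>-\<^sup>2\<^sup>|\<^sup>w\<^sup>| numerator w\<close> in the group of fractions of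
  the positive braid monoid.\<close>

definition same_fraction :: "nat \<Rightarrow> bword \<Rightarrow> bword \<Rightarrow> bool" where
  "same_fraction n u v \<longleftrightarrow>
     numerator n u @ list_pow (full_twist n) (length v)
       \<simeq> numerator n v @ list_pow (full_twist n) (length u)"

lemma same_fraction_trans:
  assumes uv: "same_fraction n u v" and vw: "same_fraction n v w"
  shows "same_fraction n u w"
proof -
  let ?q = "list_pow (full_twist n)"
  have "numerator n u @ ?q (length v) @ ?q (length w)
      \<simeq> numerator n v @ ?q (length u) @ ?q (length w)"
    using pos_eq_appendR[OF uv[unfolded same_fraction_def], of "?q (length w)"] by simp
  also have "\<dots> = (numerator n v @ ?q (length w)) @ ?q (length u)"
    using list_pow_commute by simp
  also have "\<dots> \<simeq> (numerator n w @ ?q (length v)) @ ?q (length u)"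
    using pos_eq_appendR[OF vw[unfolded same_fraction_def]] .
  finally have "(numerator n u @ ?q (length w)) @ ?q (length v)
      \<simeq> (numerator n w @ ?q (length u)) @ ?q (length v)"
    using list_pow_commute by (metis append.assoc)
  then show ?thesis
    unfolding same_fraction_def by (rule pos_eq_suffix_cancel)
qed

lemma same_fraction_context:
  assumes "same_fraction n u v"
  shows "same_fraction n (x @ u @ y) (x @ v @ y)"
proof -
  let ?q = "list_pow (full_twist n)" and ?r = "list_pow (full_twist n) (length x + length y)"
  have central: "?q l @ numerator n y \<simeq> numerator n y @ ?q l" for l
    using full_twist_pow_central[OF set_numerator] .
  have q_split: "?q (length (x @ w @ y)) = ?q (length w) @ ?r" for w
  proof -
    have "length (x @ w @ y) = length w + (length x + length y)"
      by simp
    then show ?thesis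
      by (simp only: list_pow_add)
  qed
  have "numerator n (x @ u @ y) @ ?q (length (x @ v @ y))
      = numerator n x @ numerator n u @ (numerator n y @ ?q (length v)) @ ?r"
    unfolding q_split by simp
  also have "\<dots> \<simeq> numerator n x @ (numerator n u @ ?q (length v)) @ numerator n y @ ?r"
    using pos_eq_appendL[OF pos_eq_appendR[OF pos_eq_sym[OF central]],
        of "numerator n x @ numerator n u"] by simp
  also have "\<dots> \<simeq> numerator n x @ (numerator n v @ ?q (length u)) @ numerator n y @ ?r"
    using assms unfolding same_fraction_def by (intro pos_eq_appendL pos_eq_appendR)
  also have "\<dots> \<simeq> numerator n x @ numerator n v @ (numerator n y @ ?q (length u)) @ ?r"
    using pos_eq_appendL[OF pos_eq_appendR[OF central], of "numerator n x @ numerator n v"] by simp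
  also have "\<dots> = numerator n (x @ v @ y) @ ?q (length (x @ u @ y))"
    unfolding q_split by simp
  finally show ?thesis
    unfolding same_fraction_def .
qed

lemma same_fraction_positive:
  assumes "set a \<subseteq> {1..n - 1}" and "a \<simeq> b"
  shows "same_fraction n (positive_word a) (positive_word b)"
proof -
  have valid_b: "set b \<subseteq> {1..n - 1}" and len: "length a = length b"
    using assms pos_eq_set pos_eq_length by auto
  have "numerator n (positive_word a) \<simeq> list_pow (full_twist n) (length a) @ a"
    using numerator_positive_word[OF assms(1)] .
  also have "\<dots> \<simeq> list_pow (full_twist n) (length b) @ b"
    using pos_eq_appendL[OF assms(2)] len by simp
  also have "\<dots> \<simeq> numerator n (positive_word b)"
    using pos_eq_sym[OF numerator_positive_word[OF valid_b]] .
  finally show ?thesis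
    unfolding same_fraction_def using len pos_eq_appendR by simp
qed

lemma same_fraction_cancel:
  assumes "1 \<le> i" "i \<le> n - 1"
  shows "same_fraction n [(i, b), (i, \<not> b)] []"
proof -
  have "numerator n [(i, b), (i, \<not> b)] \<simeq> full_twist n @ full_twist n"
  proof (cases b)
    case True
    then have "numerator n [(i, b), (i, \<not> b)] = full_twist n @ [i] @ full_twist_cofactor n i"
      using assms by (simp add: numerator_letter_def)
    also have "\<dots> \<simeq> full_twist n @ full_twist n"
      using pos_eq_appendL[OF pos_eq_sym[OF full_twist_Cons_cofactor[OF assms]]] by simp
    finally show ?thesis .
  next
    case False
    then have "numerator n [(i, b), (i, \<not> b)] = full_twist_cofactor n i @ full_twist n @ [i]"
      using assms by (simp add: numerator_letter_def)
    also have "\<dots> \<simeq> full_twist_cofactor n i @ [i] @ full_twist n"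
      using pos_eq_appendL[OF full_twist_letter_commute[OF assms]] by simp
    also have "\<dots> \<simeq> full_twist n @ full_twist n"
      using pos_eq_appendR[OF full_twist_cofactor_snoc[OF assms]] by simp
    finally show ?thesis .
  qed
  then show ?thesis
    unfolding same_fraction_def by (simp add: numeral_2_eq_2)
qed

lemma braid_eq_imp_same_fraction: "braid_eq n u v \<Longrightarrow> same_fraction n u v"
proof (induction rule: braid_eq.induct)
  case (cancel i b)
  then show ?case by (rule same_fraction_cancel)
next
  case (comm i j)
  then have "[i, j] \<simeq> [j, i]"
    using pos_eq_swap_head[of i j "[]"] by (auto simp: distant_def adjacent_def)
  then show ?case
    using same_fraction_positive[of "[i, j]" n "[j, i]"] comm by (simp add: positive_word_def)
next
  case (braid i j)
  then have "[i, j, i] \<simeq> [j, i, j]"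
    using pos_eq_braid_head[of i j "[]"] by (simp add: adjacent_def)
  then show ?case
    using same_fraction_positive[of "[i, j, i]" n "[j, i, j]"] braid
    by (simp add: positive_word_def)
next
  case (refl w)
  then show ?case by (simp add: same_fraction_def)
next
  case (sym u v)
  show ?case
    using sym.IH unfolding same_fraction_def by (rule pos_eq_sym)
next
  case (trans u v w)
  show ?case
    using trans.IH by (rule same_fraction_trans)
next
  case (ctxt u v x y)
  show ?case
    using ctxt.IH by (rule same_fraction_context)
qed

lemma braid_eq_letter_commute_full_twist_pow:
  assumes "1 \<le> i" "i \<le> n - 1"
  shows "braid_eq n ((i, b) # positive_word (list_pow (full_twist n) l))
                    (positive_word (list_pow (full_twist n) l) @ [(i, b)])"
proof -
  let ?W = "list_pow (full_twist n) l"
  have "[i] @ ?W \<simeq> ?W @ [i]"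
    using pos_eq_sym[OF full_twist_pow_central[of "[i]"]] assms by simp
  moreover have "set ([i] @ ?W) \<subseteq> {1..n - 1}"
    using assms subset_trans[OF set_list_pow set_full_twist] by simp
  ultimately have "braid_eq n ((i, True) # positive_word ?W) (positive_word ?W @ [(i, True)])"
    using pos_eq_imp_braid_eq by fastforce
  then show ?thesis
    using braid_eq_commute_inverse_letter[OF assms] by (cases b) simp_all
qed

lemma braid_eq_numerator_letter:
  assumes "1 \<le> i" "i \<le> n - 1"
  shows "braid_eq n (positive_word (numerator_letter n (i, b)))
                    (positive_word (full_twist n) @ [(i, b)])"
proof (cases b)
  case True
  then show ?thesis
    using assms by (simp add: numerator_letter_def braid_eq.refl)
next
  case False
  have "braid_eq n (positive_word (full_twist_cofactor n i))
      (positive_word (full_twist_cofactor n i) @ [(i, True), (i, False)])"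
    using braid_eq.sym[OF braid_eq_cancel_letter[OF assms,
          of "positive_word (full_twist_cofactor n i)" True "[]"]]
    by simp
  also have "braid_eq n \<dots> (positive_word (full_twist_cofactor n i @ [i]) @ [(i, False)])"
    by (simp add: braid_eq.refl)
  also have "braid_eq n \<dots> (positive_word (full_twist n) @ [(i, False)])"
    using set_full_twist_cofactor assms
    by (intro braid_eq_appendR pos_eq_imp_braid_eq full_twist_cofactor_snoc) auto
  finally show ?thesis
    using False assms by (simp add: numerator_letter_def)
qed

lemma braid_eq_numerator:
  "valid_word n w \<Longrightarrow>
     braid_eq n (positive_word (numerator n w))
       (positive_word (list_pow (full_twist n) (length w)) @ w)"
proof (induction w)
  case Nil
  then show ?case by (simp add: braid_eq.refl)
next
  case (Cons a w)
  obtain i b where a: "a = (i, b)" by fastforce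
  with Cons.prems have i: "1 \<le> i" "i \<le> n - 1" and "valid_word n w" by simp_all
  let ?W = "positive_word (list_pow (full_twist n) (length w))"
  have "braid_eq n (positive_word (numerator n (a # w)))
      ((positive_word (full_twist n) @ [a]) @ (?W @ w))"
    using braid_eq_append[OF braid_eq_numerator_letter[OF i] Cons.IH[OF \<open>valid_word n w\<close>]] a by simp
  also have "braid_eq n \<dots> (positive_word (full_twist n) @ (?W @ [a]) @ w)"
    using braid_eq_appendL[OF braid_eq_appendR[OF braid_eq_letter_commute_full_twist_pow[OF i]]] a
    by simp
  also have "\<dots> = positive_word (list_pow (full_twist n) (length (a # w))) @ a # w"
    by simp
  finally show ?case .
qed

theorem braid_torsion_free:
  assumes "valid_word n x" and "0 < k" and "braid_eq n (list_pow x k) []"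
  shows "braid_eq n x []"
proof -
  let ?W = "list_pow (full_twist n) (length x)"
  have "same_fraction n (list_pow x k) []"
    using braid_eq_imp_same_fraction[OF assms(3)] .
  then have "list_pow (numerator n x) k \<simeq> list_pow ?W k"
    unfolding same_fraction_def
    by (simp add: numerator_list_pow length_concat sum_list_replicate list_pow_mult)
  moreover have "?W @ numerator n x \<simeq> numerator n x @ ?W"
    using full_twist_pow_central[OF set_numerator] .
  ultimately have "numerator n x \<simeq> ?W"
    using pos_eq_root_unique[OF assms(2)] by blast
  then have "braid_eq n (positive_word (numerator n x)) (positive_word ?W)"
    using pos_eq_imp_braid_eq[OF _ set_numerator] by blast
  then have "braid_eq n (positive_word ?W @ x) (positive_word ?W @ [])"
    using braid_eq.trans[OF braid_eq.sym[OF braid_eq_numerator[OF assms(1)]]] by simp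
  moreover have "valid_word n (positive_word ?W)"
    using valid_positive_word subset_trans[OF set_list_pow set_full_twist] by blast
  ultimately show ?thesis
    using braid_eq_prefix_cancel by blast
qed

lemma braid_eq_word_pow_Nil:
  assumes "valid_word n x" and "k \<noteq> 0" and "braid_eq n (word_pow x k) []"
  shows "braid_eq n x []"
proof (cases "0 < k")
  case True
  then show ?thesis
    using braid_torsion_free[OF assms(1), of "nat k"] assms(3) by (simp add: word_pow_def)
next
  case False
  then have "braid_eq n (inv_word x) []"
    using braid_torsion_free[OF valid_inv_word[OF assms(1)], of "nat (- k)"] assms(2,3)
    by (simp add: word_pow_def)
  then have "braid_eq n (x @ []) (x @ inv_word x)"
    using braid_eq_appendL[OF braid_eq.sym] by blast
  also have "braid_eq n \<dots> []"
    using braid_eq_inv_word_right[OF assms(1)] .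
  finally show ?thesis by simp
qed

section \<open>Crossings between two blocks of strands\<close>

definition swap_positions :: "(nat \<Rightarrow> bool) \<Rightarrow> nat \<Rightarrow> nat \<Rightarrow> bool" where
  "swap_positions s j = s(j := s (Suc j), Suc j := s j)"

text \<open>The strands are coloured by \<open>s\<close> according to their starting positions; the letter
  \<open>(j, b)\<close> crosses the strands at positions \<open>j\<close> and \<open>j + 1\<close>. The invariant counts, with sign,
  the crossings between strands of different colour.\<close>

fun colouring_after :: "(nat \<Rightarrow> bool) \<Rightarrow> bword \<Rightarrow> nat \<Rightarrow> bool" where
  "colouring_after s [] = s"
| "colouring_after s ((j, b) # w) = colouring_after (swap_positions s j) w"

fun mixed_crossings :: "(nat \<Rightarrow> bool) \<Rightarrow> bword \<Rightarrow> int" where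
  "mixed_crossings s [] = 0"
| "mixed_crossings s ((j, b) # w) =
     (if s j \<noteq> s (Suc j) then (if b then 1 else -1) else 0)
       + mixed_crossings (swap_positions s j) w"

lemma colouring_after_append: "colouring_after s (u @ v) = colouring_after (colouring_after s u) v"
  by (induction s u rule: colouring_after.induct) auto

lemma mixed_crossings_append:
  "mixed_crossings s (u @ v) = mixed_crossings s u + mixed_crossings (colouring_after s u) v"
  by (induction s u rule: mixed_crossings.induct) auto

lemma braid_eq_imp_mixed_crossings:
  "braid_eq n u v \<Longrightarrow>
     \<forall>s. colouring_after s u = colouring_after s v \<and> mixed_crossings s u = mixed_crossings s v"
proof (induction rule: braid_eq.induct)
  case (cancel i b)
  show ?case by (auto simp: swap_positions_def fun_eq_iff)
next
  case (comm i j)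
  then show ?case by (auto simp: swap_positions_def fun_eq_iff)
next
  case (braid i j)
  then have "j = Suc i \<or> i = Suc j" by auto
  then show ?case by (auto simp: swap_positions_def fun_eq_iff)
next
  case (ctxt u v x y)
  then show ?case by (simp add: colouring_after_append mixed_crossings_append)
qed simp_all

lemma mixed_crossings_missing_letter:
  assumes "\<forall>a\<in>set w. fst a \<noteq> g"
  shows "colouring_after (\<lambda>p. p \<le> g) w = (\<lambda>p. p \<le> g) \<and> mixed_crossings (\<lambda>p. p \<le> g) w = 0"
  using assms
proof (induction w)
  case Nil
  then show ?case by simp
next
  case (Cons a w)
  obtain j b where a: "a = (j, b)" by fastforce
  with Cons.prems have "j \<noteq> g" by auto
  then have "swap_positions (\<lambda>p. p \<le> g) j = (\<lambda>p. p \<le> g)" and "(j \<le> g) = (Suc j \<le> g)"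
    by (auto simp: swap_positions_def fun_eq_iff)
  then show ?case using Cons a by simp
qed

lemma mixed_crossings_sign:
  "\<forall>a\<in>set w. snd a = b \<Longrightarrow> if b then 0 \<le> mixed_crossings s w else mixed_crossings s w \<le> 0"
  by (induction s w rule: mixed_crossings.induct) (auto split: if_splits)

lemma mixed_crossings_nonzero:
  assumes sign: "\<forall>a\<in>set w. snd a = b" and "(g, b) \<in> set w"
  shows "mixed_crossings (\<lambda>p. p \<le> g) w \<noteq> 0"
proof -
  let ?s = "\<lambda>p. p \<le> g"
  have "\<exists>x\<in>set w. fst x = g"
    using \<open>(g, b) \<in> set w\<close> by force
  then obtain ys x zs where w: "w = ys @ x # zs" and "fst x = g" and ys: "\<forall>y\<in>set ys. fst y \<noteq> g"
    using split_list_first_prop[of w "\<lambda>x. fst x = g"] by blast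
  moreover have "snd x = b"
    using sign w by simp
  ultimately have x: "x = (g, b)"
    by (simp add: prod_eq_iff)
  have "mixed_crossings ?s w = mixed_crossings ?s (x # zs)"
    using mixed_crossings_missing_letter[OF ys] w by (simp add: mixed_crossings_append)
  also have "\<dots> = (if b then 1 else -1) + mixed_crossings (swap_positions ?s g) zs"
    using x by simp
  finally have "mixed_crossings ?s w = (if b then 1 else -1) + mixed_crossings (swap_positions ?s g) zs"
    .
  moreover have "\<forall>a\<in>set zs. snd a = b"
    using sign w by simp
  ultimately show ?thesis
    using mixed_crossings_sign[of zs b "swap_positions ?s g"] by (cases b) auto
qed

lemma mixed_crossings_Delta_word_pow:
  assumes "1 \<le> g" "g \<le> n - 1" "m \<noteq> 0"
  shows "mixed_crossings (\<lambda>p. p \<le> g) (word_pow (Delta_word n) m) \<noteq> 0"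
proof -
  have positive: "\<forall>a\<in>set (Delta_word n). snd a = True"
    unfolding Delta_word_def by auto
  have g: "(g, True) \<in> set (Delta_word n)"
    unfolding Delta_word_def using assms(1,2) by force
  show ?thesis
  proof (cases "0 < m")
    case True
    then have "set (word_pow (Delta_word n) m) = set (Delta_word n)"
      by (simp add: word_pow_def)
    then show ?thesis
      using mixed_crossings_nonzero[of "word_pow (Delta_word n) m" True g] positive g by simp
  next
    case False
    then have "set (word_pow (Delta_word n) m) = set (inv_word (Delta_word n))"
      using assms(3) by (simp add: word_pow_def)
    moreover have "\<forall>a\<in>set (inv_word (Delta_word n)). snd a = False"
      using positive unfolding set_inv_word by auto
    moreover have "(g, False) \<in> set (inv_word (Delta_word n))"
      using g unfolding set_inv_word by force
    ultimately show ?thesis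
      using mixed_crossings_nonzero[of "word_pow (Delta_word n) m" False g] by simp
  qed
qed

lemma exists_missing_letter:
  assumes "length w < n - 1"
  shows "\<exists>g. 1 \<le> g \<and> g \<le> n - 1 \<and> (\<forall>a\<in>set w. fst a \<noteq> g)"
proof (rule ccontr)
  assume "\<not> ?thesis"
  then have "{1..n - 1} \<subseteq> fst ` set w" by force
  then have "card {1..n - 1} \<le> card (fst ` set w)"
    by (intro card_mono) auto
  also have "\<dots> \<le> card (set w)"
    by (rule card_image_le) simp
  also have "\<dots> \<le> length w"
    by (rule card_length)
  finally show False using assms by simp
qed

theorem lemma18:
  fixes n :: nat and X :: bword
  assumes "n \<ge> 2"
    and "valid_word n X"
    and "periodic_braid n X"
    and "\<not> braid_eq n X []"
  shows "length X \<ge> n - 1"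
proof (rule ccontr)
  assume "\<not> length X \<ge> n - 1"
  then obtain g where g: "1 \<le> g" "g \<le> n - 1" and missing: "\<forall>a\<in>set X. fst a \<noteq> g"
    using exists_missing_letter by (meson not_le)
  obtain k m where "k \<noteq> 0" and km: "braid_eq n (word_pow X k) (word_pow (Delta_word n) (2 * m))"
    using assms(3) unfolding periodic_braid_def by blast
  have "\<forall>a\<in>set (word_pow X k). fst a \<noteq> g"
    using missing by (auto simp: word_pow_def set_inv_word)
  then have "mixed_crossings (\<lambda>p. p \<le> g) (word_pow X k) = 0"
    using mixed_crossings_missing_letter by blast
  moreover have "mixed_crossings (\<lambda>p. p \<le> g) (word_pow X k)
      = mixed_crossings (\<lambda>p. p \<le> g) (word_pow (Delta_word n) (2 * m))"
    using braid_eq_imp_mixed_crossings[OF km] by blast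
  ultimately have "2 * m = 0"
    using mixed_crossings_Delta_word_pow[OF g] by metis
  then have "m = 0" by simp
  then have "braid_eq n (word_pow X k) []"
    using km by (simp add: word_pow_def)
  then show False
    using braid_eq_word_pow_Nil[OF assms(2) \<open>k \<noteq> 0\<close>] assms(4) by blast
qed

end
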